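(* Assume the Riccati solution $\bar{\mathbf{P}}_{1:s}$ exists and $\bar{\mathbf{P}}_i \succ 0$ for all $i$. Then, (i) there exists a unique Riccati solution $\hat{\mathbf{P}}_{1:r}$ in $\mathbb{S}_r^+$; (ii) $\hat{\mathbf{P}}_k = \bar{\mathbf{P}}_i$ and $\hat{\mathbf{K}}_k = \bar{\mathbf{K}}_i$ for any $i \in \hat{\Omega}_k$, for any $k$.
   Context: $\Sigma$ is an MJS $\mathbf{x}_{t+1}=\mathbf{A}_{\omega_t}\mathbf{x}_t+\mathbf{B}_{\omega_t}\mathbf{u}_t$ with $s$ modes and Markov matrix $\mathbf{T}$. Given a partition $\hat{\Omega}_{1:r}$ of $[s]$, the reduced MJS $\hat{\Sigma}$ has $r$ modes with $\hat{\mathbf{A}}_k,\hat{\mathbf{B}}_k$ the averages of $\mathbf{A}_i,\mathbf{B}_i$ over $i\in\hat{\Omega}_k$ and $\hat{\mathbf{T}}(k,l)=\frac{1}{|\hat{\Omega}_k|}\sum_{i\in\hat{\Omega}_k,j\in\hat{\Omega}_l}\mathbf{T}(i,j)$. The expanded MJS $\bar{\Sigma}$ has $s$ modes with $\bar{\mathbf{A}}_i=\hat{\mathbf{A}}_k$, $\bar{\mathbf{B}}_i=\hat{\mathbf{B}}_k$ for $i\in\hat{\Omega}_k$, and Markov matrix $\bar{\mathbf{T}}$ with $\sum_{j\in\hat{\Omega}_l}\bar{\mathbf{T}}(i,j)=\hat{\mathbf{T}}(k,l)$ for all $i\in\hat{\Omega}_k$. Fix cost matrices $\mathbf{Q}\succ0$,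 $\mathbf{R}\succ0$. Let $\mathbb{S}_m^+$ be the set of $m$-tuples of $n\times n$ PSD matrices. For an MJS with matrices $(\mathbf{A}_i,\mathbf{B}_i)$ and Markov matrix $\mathbf{T}$, define $\varphi_i(\mathbf{X}_{1:m})=\sum_j\mathbf{T}(i,j)\mathbf{X}_j$, $\mathcal{K}_i(\mathbf{X})=-(\mathbf{R}+\mathbf{B}_i^\top\varphi_i(\mathbf{X})\mathbf{B}_i)^{-1}\mathbf{B}_i^\top\varphi_i(\mathbf{X})\mathbf{A}_i$, and $\mathcal{R}_i(\mathbf{X})=\mathbf{Q}+\mathbf{A}_i^\top\varphi_i(\mathbf{X})\mathbf{A}_i-\mathbf{A}_i^\top\varphi_i(\mathbf{X})^\top\mathbf{B}_i(\mathbf{R}+\mathbf{B}_i^\top\varphi_i(\mathbf{X})\mathbf{B}_i)^{-1}\mathbf{B}_i^\top\varphi_i(\mathbf{X})\mathbf{A}_i$. A Riccati solution is $\mathbf{P}_{1:m}$ with $\mathbf{P}_i=\mathcal{R}_i(\mathbf{P}_{1:m})$ for all $i$ (coupled Riccati equations), and the corresponding LQR gains are $\mathbf{K}_i=\mathcal{K}_i(\mathbf{P}_{1:m})$. $\bar{\mathbf{P}}_{1:s},\bar{\mathbf{K}}_{1:s}$ denote these for $\bar{\Sigma}$ and $\hat{\mathbf{P}}_{1:r},\hat{\mathbf{K}}_{1:r}$ for $\hat{\Sigma}$. *)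

theory Defs
  imports "HOL-Analysis.Analysis"
begin

text \<open>Matrices are HOL-Analysis matrices: states in real^'n, inputs in real^'p.
  Modes are indexed by natural numbers 0..<m (0-based). An MJS is given by
  A :: nat => real^'n^'n, B :: nat => real^'p^'n and T :: nat => nat => real.\<close>

definition symmetric_mat :: "real^'a^'a \<Rightarrow> bool" where
  "symmetric_mat M \<longleftrightarrow> transpose M = M"

definition psd_mat :: "real^'a^'a \<Rightarrow> bool" where
  "psd_mat M \<longleftrightarrow> symmetric_mat M \<and> (\<forall>x. 0 \<le> x \<bullet> (M *v x))"

definition pd_mat :: "real^'a^'a \<Rightarrow> bool" where
  "pd_mat M \<longleftrightarrow> symmetric_mat M \<and> (\<forall>x. x \<noteq> 0 \<longrightarrow> 0 < x \<bullet> (M *v x))"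

definition markov :: "nat \<Rightarrow> (nat \<Rightarrow> nat \<Rightarrow> real) \<Rightarrow> bool" where
  "markov m T \<longleftrightarrow> (\<forall>i<m. \<forall>j<m. 0 \<le> T i j) \<and> (\<forall>i<m. (\<Sum>j<m. T i j) = 1)"

definition in_S_plus :: "nat \<Rightarrow> (nat \<Rightarrow> real^'n^'n) \<Rightarrow> bool" where
  "in_S_plus m X \<longleftrightarrow> (\<forall>i<m. psd_mat (X i))"

definition phi :: "nat \<Rightarrow> (nat \<Rightarrow> nat \<Rightarrow> real) \<Rightarrow> (nat \<Rightarrow> real^'n^'n) \<Rightarrow> nat \<Rightarrow> real^'n^'n" where
  "phi m T X i = (\<Sum>j<m. T i j *\<^sub>R X j)"

definition gainK ::
  "real^'p^'p \<Rightarrow> nat \<Rightarrow> (nat \<Rightarrow> real^'n^'n) \<Rightarrow> (nat \<Rightarrow> real^'p^'n)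
    \<Rightarrow> (nat \<Rightarrow> nat \<Rightarrow> real) \<Rightarrow> (nat \<Rightarrow> real^'n^'n) \<Rightarrow> nat \<Rightarrow> real^'n^'p" where
  "gainK R m A B T X i =
     - (matrix_inv (R + transpose (B i) ** phi m T X i ** B i)
         ** transpose (B i) ** phi m T X i ** A i)"

definition riccR ::
  "real^'n^'n \<Rightarrow> real^'p^'p \<Rightarrow> nat \<Rightarrow> (nat \<Rightarrow> real^'n^'n) \<Rightarrow> (nat \<Rightarrow> real^'p^'n)
    \<Rightarrow> (nat \<Rightarrow> nat \<Rightarrow> real) \<Rightarrow> (nat \<Rightarrow> real^'n^'n) \<Rightarrow> nat \<Rightarrow> real^'n^'n" where
  "riccR Q R m A B T X i =
     Q + transpose (A i) ** phi m T X i ** A i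
       - transpose (A i) ** transpose (phi m T X i) ** B i
         ** matrix_inv (R + transpose (B i) ** phi m T X i ** B i)
         ** transpose (B i) ** phi m T X i ** A i"

definition riccati_sol ::
  "real^'n^'n \<Rightarrow> real^'p^'p \<Rightarrow> nat \<Rightarrow> (nat \<Rightarrow> real^'n^'n) \<Rightarrow> (nat \<Rightarrow> real^'p^'n)
    \<Rightarrow> (nat \<Rightarrow> nat \<Rightarrow> real) \<Rightarrow> (nat \<Rightarrow> real^'n^'n) \<Rightarrow> bool" where
  "riccati_sol Q R m A B T P \<longleftrightarrow> (\<forall>i<m. P i = riccR Q R m A B T P i)"

definition is_partition :: "nat \<Rightarrow> nat \<Rightarrow> (nat \<Rightarrow> nat set) \<Rightarrow> bool" where
  "is_partition s r \<Omega> \<longleftrightarrow>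
     (\<forall>k<r. \<Omega> k \<noteq> {}) \<and>
     (\<forall>k<r. \<forall>l<r. k \<noteq> l \<longrightarrow> \<Omega> k \<inter> \<Omega> l = {}) \<and>
     (\<Union>k<r. \<Omega> k) = {..<s}"

definition avg_mat :: "(nat \<Rightarrow> nat set) \<Rightarrow> (nat \<Rightarrow> 'a::real_vector) \<Rightarrow> nat \<Rightarrow> 'a" where
  "avg_mat \<Omega> X k = (1 / real (card (\<Omega> k))) *\<^sub>R (\<Sum>i\<in>\<Omega> k. X i)"

definition reduced_T :: "(nat \<Rightarrow> nat set) \<Rightarrow> (nat \<Rightarrow> nat \<Rightarrow> real) \<Rightarrow> nat \<Rightarrow> nat \<Rightarrow> real" where
  "reduced_T \<Omega> T k l = (1 / real (card (\<Omega> k))) * (\<Sum>i\<in>\<Omega> k. \<Sum>j\<in>\<Omega> l. T i j)"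

definition block_of :: "nat \<Rightarrow> (nat \<Rightarrow> nat set) \<Rightarrow> nat \<Rightarrow> nat" where
  "block_of r \<Omega> i = (THE k. k < r \<and> i \<in> \<Omega> k)"

definition expand :: "nat \<Rightarrow> (nat \<Rightarrow> nat set) \<Rightarrow> (nat \<Rightarrow> 'a) \<Rightarrow> nat \<Rightarrow> 'a" where
  "expand r \<Omega> Y i = Y (block_of r \<Omega> i)"

end

theory Submission
  imports Defs
begin

(* Completing the square shows that x'P_i x, for a PSD Riccati solution P, is the minimum over
   inputs u of x'Qx + u'Ru + y'phi_i(P)y with y = A_i x + B_i u, attained at the LQR gain.
   Let X, Y be PSD solutions and rho a relation between modes along which the system matrices
   agree and the rows of the transition matrix admit a coupling.  A bound
   x'X_a x <= (1 + c) x'Y_b x for all (a, b) in rho then reproduces itself with c replaced by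
   c (1 - q/M), where Q >= q I and Y <= M I; iterating gives X_a <= Y_b.  On the diagonal this is
   uniqueness of the PSD solution.  On the block relation of the partition, where the rows of Tbar
   in one block put equal mass on each block, it shows that Pbar is constant on blocks, and a
   block-constant solution of the expanded system solves the reduced one with the same gains. *)

lemma inner_transpose_mv: "x \<bullet> (transpose A *v y) = (A *v x) \<bullet> (y::real^_)"
  by (simp add: dot_lmul_matrix[symmetric] inner_commute)

lemma inner_vector_matrix_mult: "x \<bullet> (y v* A) = (A *v x) \<bullet> (y::real^_)"
  by (metis dot_lmul_matrix inner_commute)

lemma symmetric_mat_inner: "symmetric_mat M \<Longrightarrow> x \<bullet> (M *v y) = (M *v x) \<bullet> (y::real^_)"
  by (metis inner_transpose_mv symmetric_mat_def)

lemma transpose_add: "transpose (A + B) = transpose A + transpose (B::real^_^_)"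
  by (simp add: transpose_def vec_eq_iff)

lemma transpose_sum: "transpose (sum f S) = (\<Sum>j\<in>S. transpose (f j :: real^_^_))"
  by (induction S rule: infinite_finite_induct) (auto simp: transpose_add transpose_def vec_eq_iff)

lemma sum_matrix_vector_mult: "sum f S *v y = (\<Sum>j\<in>S. f j *v (y::real^_))"
  by (induction S rule: infinite_finite_induct) (auto simp: matrix_vector_mult_add_rdistrib)

lemma uminus_matrix_vector_mult: "(- A) *v x = - (A *v (x::real^_))"
  by (simp add: matrix_vector_mult_def vec_eq_iff sum_negf)

lemma symmetric_mat_quad_add:
  "symmetric_mat F \<Longrightarrow>
    (v + w) \<bullet> (F *v (v + w)) = v \<bullet> (F *v v) + 2 * (w \<bullet> (F *v v)) + w \<bullet> (F *v (w::real^_))"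
  using symmetric_mat_inner[of F v w]
  by (simp add: matrix_vector_right_distrib inner_add_left inner_add_right inner_commute)

lemma quad_congruence: "x \<bullet> ((transpose A ** F ** A) *v x) = (A *v x) \<bullet> (F *v (A *v (x::real^_)))"
  by (simp add: matrix_vector_mul_assoc[symmetric] inner_transpose_mv inner_vector_matrix_mult)

lemma symmetric_mat_eqI:
  fixes X Y :: "real^'n^'n"
  assumes "symmetric_mat X" "symmetric_mat Y" and quad_eq: "\<And>x. x \<bullet> (X *v x) = x \<bullet> (Y *v x)"
  shows "X = Y"
proof -
  define D where "D = X - Y"
  have D_sym: "symmetric_mat D"
    using assms(1,2) by (simp add: D_def symmetric_mat_def transpose_def vec_eq_iff)
  have D_quad: "x \<bullet> (D *v x) = 0" for x
    by (simp add: D_def quad_eq matrix_vector_mult_diff_rdistrib inner_diff_right)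
  have "(D *v y) \<bullet> (D *v y) = 0" for y
    using symmetric_mat_quad_add[OF D_sym, of y "D *v y"] by (simp add: D_quad)
  then have "X *v y = Y *v y" for y
    by (simp add: D_def matrix_vector_mult_diff_rdistrib)
  then show ?thesis by (simp add: matrix_eq)
qed

lemma pd_mat_imp_psd_mat: "pd_mat M \<Longrightarrow> psd_mat M"
  unfolding pd_mat_def psd_mat_def by (metis inner_zero_left order.refl less_imp_le)

lemma pd_mat_quad_ge:
  fixes Q :: "real^'n^'n"
  assumes "pd_mat Q"
  obtains q where "q > 0" "\<And>x. q * (norm x)\<^sup>2 \<le> x \<bullet> (Q *v x)"
proof -
  have "continuous_on (sphere 0 1) (\<lambda>x::real^'n. x \<bullet> (Q *v x))"
    by (intro continuous_intros linear_continuous_on matrix_vector_mul_bounded_linear)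
  moreover have "sphere (0::real^'n) 1 \<noteq> {}" by simp
  ultimately obtain u where u: "u \<in> sphere 0 1"
    and u_min: "\<And>y. y \<in> sphere 0 1 \<Longrightarrow> u \<bullet> (Q *v u) \<le> y \<bullet> (Q *v y)"
    using continuous_attains_inf[OF compact_sphere] by blast
  have "u \<noteq> 0" using u by auto
  then have "0 < u \<bullet> (Q *v u)" using assms unfolding pd_mat_def by blast
  moreover have "u \<bullet> (Q *v u) * (norm x)\<^sup>2 \<le> x \<bullet> (Q *v x)" for x
  proof (cases "x = 0")
    case False
    have "u \<bullet> (Q *v u) \<le> (x /\<^sub>R norm x) \<bullet> (Q *v (x /\<^sub>R norm x))"
      using False by (intro u_min) simp
    also have "\<dots> = x \<bullet> (Q *v x) / (norm x)\<^sup>2"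
      by (simp add: matrix_vector_mult_scaleR power2_eq_square field_simps)
    finally show ?thesis using False by (simp add: field_simps)
  qed simp
  ultimately show thesis by (rule that)
qed

lemma quad_le_onorm: "x \<bullet> (P *v x) \<le> onorm ((*v) P) * (norm x)\<^sup>2"
  for P :: "real^'n^'n"
proof -
  have "norm (P *v x) \<le> onorm ((*v) P) * norm x"
    by (rule onorm) (rule matrix_vector_mul_bounded_linear)
  then have "norm x * norm (P *v x) \<le> norm x * (onorm ((*v) P) * norm x)"
    by (simp add: mult_left_mono)
  moreover have "x \<bullet> (P *v x) \<le> norm x * norm (P *v x)"
    using Cauchy_Schwarz_ineq2[of x "P *v x"] by linarith
  ultimately show ?thesis by (simp add: power2_eq_square mult_ac)
qed

lemma quad_form_bounded:
  fixes P :: "nat \<Rightarrow> real^'n^'n"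
  obtains M where "c \<le> M" and "\<And>j x. j < m \<Longrightarrow> x \<bullet> (P j *v x) \<le> M * (norm x)\<^sup>2"
proof
  define M where "M = max c 0 + (\<Sum>j<m. onorm ((*v) (P j)))"
  have onorm_nonneg: "0 \<le> onorm ((*v) (P j))" for j
    by (simp add: onorm_pos_le matrix_vector_mul_bounded_linear)
  then show "c \<le> M" by (simp add: M_def sum_nonneg add_increasing2)
  fix j x assume "j < m"
  then have "onorm ((*v) (P j)) \<le> M"
    unfolding M_def using onorm_nonneg by (intro add_increasing member_le_sum) auto
  then show "x \<bullet> (P j *v x) \<le> M * (norm x)\<^sup>2"
    using quad_le_onorm by (meson mult_right_mono order_trans zero_le_power2)
qed

lemma pd_mat_add_congruence:
  fixes R :: "real^'p^'p" and B :: "real^'p^'n" and F :: "real^'n^'n"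
  assumes "pd_mat R" "psd_mat F"
  shows "pd_mat (R + transpose B ** F ** B)"
  using assms quad_congruence[of _ B F] unfolding pd_mat_def psd_mat_def symmetric_mat_def
  by (simp add: transpose_add matrix_transpose_mul matrix_mul_assoc
      matrix_vector_mult_add_rdistrib inner_add_right add_pos_nonneg)

lemma pd_mat_right_inverse: "pd_mat S \<Longrightarrow> S ** matrix_inv S = mat 1"
  for S :: "real^'n^'n"
proof -
  assume "pd_mat S"
  then have "S *v x = 0 \<Longrightarrow> x = 0" for x
    unfolding pd_mat_def by (metis inner_zero_right less_irrefl)
  then have "invertible S"
    using matrix_left_invertible_ker invertible_left_inverse by blast
  then show ?thesis
    unfolding invertible_def matrix_inv_def by (rule someI2_ex) blast
qed

lemma completion_of_squares:
  fixes A :: "real^'n^'n" and B :: "real^'p^'n" and F Q :: "real^'n^'n" and R :: "real^'p^'p"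
  defines "S \<equiv> R + transpose B ** F ** B"
  defines "L \<equiv> matrix_inv S ** transpose B ** F ** A"
  assumes F_sym: "symmetric_mat F" and S_sym: "symmetric_mat S"
    and S_inv: "S ** matrix_inv S = mat 1"
  shows "x \<bullet> (Q *v x) + u \<bullet> (R *v u) + (A *v x + B *v u) \<bullet> (F *v (A *v x + B *v u)) =
           x \<bullet> ((Q + transpose A ** F ** A
             - transpose A ** transpose F ** B ** matrix_inv S ** transpose B ** F ** A) *v x)
           + (u + L *v x) \<bullet> (S *v (u + L *v x))"
proof -
  define w where "w = A *v x"
  define g where "g = transpose B *v (F *v w)"
  define h where "h = L *v x"
  have "S ** L = transpose B ** F ** A"
    unfolding L_def by (metis matrix_mul_assoc S_inv matrix_mul_lid)
  then have Sh: "S *v h = g"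
    by (simp add: h_def g_def w_def matrix_vector_mul_assoc matrix_mul_assoc)
  have "x \<bullet> ((transpose A ** transpose F ** B ** matrix_inv S ** transpose B ** F ** A) *v x)
      = w \<bullet> (F *v (B *v h))"
    using F_sym unfolding symmetric_mat_def
    by (simp only: w_def h_def L_def matrix_vector_mul_assoc[symmetric] inner_transpose_mv)
  also have "\<dots> = (B *v h) \<bullet> (F *v w)"
    using symmetric_mat_inner[OF F_sym, of w "B *v h"] by (simp add: inner_commute)
  also have "\<dots> = g \<bullet> h"
    unfolding g_def transpose_matrix_vector dot_lmul_matrix by (rule inner_commute)
  finally have ricc: "x \<bullet> ((Q + transpose A ** F ** A
      - transpose A ** transpose F ** B ** matrix_inv S ** transpose B ** F ** A) *v x)
      = x \<bullet> (Q *v x) + w \<bullet> (F *v w) - g \<bullet> h"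
    using quad_congruence[of x A F]
    by (simp add: w_def matrix_vector_mult_add_rdistrib matrix_vector_mult_diff_rdistrib
        inner_add_right inner_diff_right)
  have "u \<bullet> (S *v u) = u \<bullet> (R *v u) + (B *v u) \<bullet> (F *v (B *v u))"
    using quad_congruence[of u B F]
    by (simp add: S_def matrix_vector_mult_add_rdistrib inner_add_right)
  moreover have "h \<bullet> (S *v u) = u \<bullet> g"
    using symmetric_mat_inner[OF S_sym, of h u] Sh by (simp add: inner_commute)
  ultimately have square: "(u + h) \<bullet> (S *v (u + h)) =
      u \<bullet> (R *v u) + (B *v u) \<bullet> (F *v (B *v u)) + 2 * (u \<bullet> g) + h \<bullet> g"
    using symmetric_mat_quad_add[OF S_sym, of u h] Sh by simp
  have "u \<bullet> g = (B *v u) \<bullet> (F *v w)"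
    by (simp add: g_def inner_transpose_mv inner_vector_matrix_mult)
  moreover note symmetric_mat_quad_add[OF F_sym, of w "B *v u"] inner_commute[of h g]
  ultimately show ?thesis
    using ricc square unfolding w_def[symmetric] h_def[symmetric] by linarith
qed

lemma phi_quad: "y \<bullet> (phi m T X i *v y) = (\<Sum>j<m. T i j * (y \<bullet> (X j *v y)))"
  by (simp add: phi_def sum_matrix_vector_mult inner_sum_right
      scaleR_matrix_vector_assoc[symmetric])

lemma phi_psd:
  assumes "\<forall>i<m. \<forall>j<m. 0 \<le> T i j" "i < m" "in_S_plus m X"
  shows "psd_mat (phi m T X i)"
proof -
  have "symmetric_mat (phi m T X i)"
    using assms(3) by (auto simp: in_S_plus_def psd_mat_def symmetric_mat_def phi_def
        transpose_sum transpose_scalar intro: sum.cong)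
  moreover have "0 \<le> y \<bullet> (phi m T X i *v y)" for y
    using assms by (auto simp: in_S_plus_def psd_mat_def phi_quad intro!: sum_nonneg)
  ultimately show ?thesis by (simp add: psd_mat_def)
qed

lemma riccR_completion_of_squares:
  fixes A :: "nat \<Rightarrow> real^'n^'n" and B :: "nat \<Rightarrow> real^'p^'n" and R :: "real^'p^'p"
    and T :: "nat \<Rightarrow> nat \<Rightarrow> real" and X :: "nat \<Rightarrow> real^'n^'n" and m i :: nat
  defines "S \<equiv> R + transpose (B i) ** phi m T X i ** B i"
  assumes T_nonneg: "\<forall>i<m. \<forall>j<m. 0 \<le> T i j" and i: "i < m"
    and X_psd: "in_S_plus m X" and R_pd: "pd_mat R"
  shows "x \<bullet> (Q *v x) + u \<bullet> (R *v u)
      + (A i *v x + B i *v u) \<bullet> (phi m T X i *v (A i *v x + B i *v u))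
    = x \<bullet> (riccR Q R m A B T X i *v x)
      + (u - gainK R m A B T X i *v x) \<bullet> (S *v (u - gainK R m A B T X i *v x))"
proof -
  have F_psd: "psd_mat (phi m T X i)" by (rule phi_psd[OF T_nonneg i X_psd])
  then have S_pd: "pd_mat S" unfolding S_def by (rule pd_mat_add_congruence[OF R_pd])
  show ?thesis
    using completion_of_squares[where F = "phi m T X i" and R = R and B = "B i" and A = "A i"]
      F_psd S_pd pd_mat_right_inverse[OF S_pd]
    by (simp add: S_def riccR_def gainK_def psd_mat_def pd_mat_def uminus_matrix_vector_mult)
qed

lemma riccR_quad_le:
  fixes A :: "nat \<Rightarrow> real^'n^'n" and B :: "nat \<Rightarrow> real^'p^'n"
  assumes "\<forall>i<m. \<forall>j<m. 0 \<le> T i j" "i < m" "in_S_plus m X" "pd_mat R"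
  shows "x \<bullet> (riccR Q R m A B T X i *v x) \<le> x \<bullet> (Q *v x) + u \<bullet> (R *v u)
    + (A i *v x + B i *v u) \<bullet> (phi m T X i *v (A i *v x + B i *v u))"
proof -
  have "psd_mat (R + transpose (B i) ** phi m T X i ** B i)"
    using pd_mat_add_congruence[OF assms(4) phi_psd[OF assms(1-3)]] by (rule pd_mat_imp_psd_mat)
  then show ?thesis
    using riccR_completion_of_squares[OF assms, where Q = Q and x = x and u = u]
    unfolding psd_mat_def
    by (metis le_add_same_cancel1)
qed

lemma riccR_quad_gainK:
  fixes A :: "nat \<Rightarrow> real^'n^'n" and B :: "nat \<Rightarrow> real^'p^'n" and x :: "real^'n"
  assumes "\<forall>i<m. \<forall>j<m. 0 \<le> T i j" "i < m" "in_S_plus m X" "pd_mat R"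
  defines "u \<equiv> gainK R m A B T X i *v x"
  shows "x \<bullet> (riccR Q R m A B T X i *v x) = x \<bullet> (Q *v x) + u \<bullet> (R *v u)
    + (A i *v x + B i *v u) \<bullet> (phi m T X i *v (A i *v x + B i *v u))"
  using riccR_completion_of_squares[OF assms(1-4), where Q = Q and x = x and u = u]
  by (simp add: u_def)

(* Dual form of the statement that the weights v and w admit a coupling supported on rho. *)
definition dominated_along :: "(nat \<times> nat) set \<Rightarrow> nat \<Rightarrow> (nat \<Rightarrow> real) \<Rightarrow> (nat \<Rightarrow> real) \<Rightarrow> bool"
  where "dominated_along \<rho> m v w \<longleftrightarrow>
    (\<forall>f g. (\<forall>(j, j') \<in> \<rho>. f j \<le> g j') \<longrightarrow> (\<Sum>j<m. v j * f j) \<le> (\<Sum>j<m. w j * g j))"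

lemma dominated_along_Id_on: "\<forall>j<m. 0 \<le> v j \<Longrightarrow> dominated_along (Id_on {..<m}) m v v"
  unfolding dominated_along_def by (auto intro!: sum_mono mult_left_mono)

locale riccati_comparison =
  fixes Q :: "real^'n::finite^'n" and R :: "real^'p::finite^'p" and m :: nat
    and A :: "nat \<Rightarrow> real^'n^'n" and B :: "nat \<Rightarrow> real^'p^'n" and T :: "nat \<Rightarrow> nat \<Rightarrow> real"
    and X Y :: "nat \<Rightarrow> real^'n^'n" and \<rho> :: "(nat \<times> nat) set"
  assumes T_nonneg: "\<forall>i<m. \<forall>j<m. 0 \<le> T i j"
    and Q_pd: "pd_mat Q" and R_pd: "pd_mat R"
    and X_sol: "riccati_sol Q R m A B T X" and X_psd: "in_S_plus m X"
    and Y_sol: "riccati_sol Q R m A B T Y" and Y_psd: "in_S_plus m Y"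
    and rel_sub: "\<rho> \<subseteq> {..<m} \<times> {..<m}"
    and rel_compat: "\<And>a b. (a, b) \<in> \<rho> \<Longrightarrow>
      A a = A b \<and> B a = B b \<and> dominated_along \<rho> m (T a) (T b)"
begin

definition gap_bound :: "real \<Rightarrow> bool" where
  "gap_bound c \<longleftrightarrow> (\<forall>(a, b) \<in> \<rho>. \<forall>x. x \<bullet> (X a *v x) \<le> (1 + c) * (x \<bullet> (Y b *v x)))"

definition closed_loop :: "nat \<Rightarrow> real^'n \<Rightarrow> real^'n" where
  "closed_loop b x = A b *v x + B b *v (gainK R m A B T Y b *v x)"

lemma X_quad_le:
  "a < m \<Longrightarrow> x \<bullet> (X a *v x) \<le>
    x \<bullet> (Q *v x) + u \<bullet> (R *v u) + (A a *v x + B a *v u) \<bullet> (phi m T X a *v (A a *v x + B a *v u))"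
  using riccR_quad_le[OF T_nonneg _ X_psd R_pd] X_sol by (simp add: riccati_sol_def)

lemma Y_quad_eq:
  "b < m \<Longrightarrow> x \<bullet> (Y b *v x) = x \<bullet> (Q *v x)
    + (gainK R m A B T Y b *v x) \<bullet> (R *v (gainK R m A B T Y b *v x))
    + closed_loop b x \<bullet> (phi m T Y b *v closed_loop b x)"
  using riccR_quad_gainK[OF T_nonneg _ Y_psd R_pd] Y_sol
  by (simp add: riccati_sol_def closed_loop_def)

lemma Y_quad_ge:
  "b < m \<Longrightarrow>
    x \<bullet> (Q *v x) + closed_loop b x \<bullet> (phi m T Y b *v closed_loop b x) \<le> x \<bullet> (Y b *v x)"
  using Y_quad_eq R_pd pd_mat_imp_psd_mat unfolding psd_mat_def by fastforce

lemma Y_quad_nonneg: "b < m \<Longrightarrow> 0 \<le> x \<bullet> (Y b *v x)"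
  using Y_psd by (simp add: in_S_plus_def psd_mat_def)

lemma Y_quad_ge_Q: "b < m \<Longrightarrow> x \<bullet> (Q *v x) \<le> x \<bullet> (Y b *v x)"
  using Y_quad_ge[of b x] phi_psd[OF T_nonneg _ Y_psd, of b]
  unfolding psd_mat_def by (meson add_increasing2 order_trans order_refl)

lemma Y_decay:
  assumes q: "0 < q" "q \<le> M" "\<And>x. q * (norm x)\<^sup>2 \<le> x \<bullet> (Q *v x)"
    and M: "\<And>x. x \<bullet> (Y b *v x) \<le> M * (norm x)\<^sup>2" and b: "b < m"
  shows "closed_loop b x \<bullet> (phi m T Y b *v closed_loop b x) \<le> (1 - q / M) * (x \<bullet> (Y b *v x))"
proof -
  have "q / M * (x \<bullet> (Y b *v x)) \<le> q / M * (M * (norm x)\<^sup>2)"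
    using q M by (intro mult_left_mono) simp_all
  also have "\<dots> \<le> x \<bullet> (Q *v x)" using q by simp
  finally show ?thesis using Y_quad_ge[OF b, of x] by (simp add: left_diff_distrib)
qed

lemma gap_bound_init:
  assumes q: "0 < q" "\<And>x. q * (norm x)\<^sup>2 \<le> x \<bullet> (Q *v x)"
    and M: "0 \<le> M" "\<And>a x. a < m \<Longrightarrow> x \<bullet> (X a *v x) \<le> M * (norm x)\<^sup>2"
  shows "gap_bound (M / q)"
  unfolding gap_bound_def
proof (intro ballI allI, clarify)
  fix a b x assume "(a, b) \<in> \<rho>"
  then have a: "a < m" and b: "b < m" using rel_sub by auto
  have "x \<bullet> (X a *v x) \<le> M / q * (q * (norm x)\<^sup>2)" using M(2)[OF a] q(1) by simp
  also have "\<dots> \<le> M / q * (x \<bullet> (Y b *v x))"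
    using q M(1) Y_quad_ge_Q[OF b] by (intro mult_left_mono) (auto intro: order_trans)
  finally show "x \<bullet> (X a *v x) \<le> (1 + M / q) * (x \<bullet> (Y b *v x))"
    using Y_quad_nonneg[OF b, of x] by (simp add: distrib_right)
qed

lemma gap_bound_step:
  assumes c: "0 \<le> c" "gap_bound c"
    and decay: "\<And>b x. b < m \<Longrightarrow>
      closed_loop b x \<bullet> (phi m T Y b *v closed_loop b x) \<le> e * (x \<bullet> (Y b *v x))"
  shows "gap_bound (c * e)"
  unfolding gap_bound_def
proof (intro ballI allI, clarify)
  fix a b x assume ab: "(a, b) \<in> \<rho>"
  then have a: "a < m" and b: "b < m" using rel_sub by auto
  obtain "A a = A b" "B a = B b" and dom: "dominated_along \<rho> m (T a) (T b)"
    using rel_compat[OF ab] by blast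
  define u where "u = gainK R m A B T Y b *v x"
  define y where "y = closed_loop b x"
  have y: "y = A a *v x + B a *v u"
    by (simp add: y_def u_def closed_loop_def \<open>A a = A b\<close> \<open>B a = B b\<close>)
  have "\<forall>(j, j') \<in> \<rho>. y \<bullet> (X j *v y) \<le> (1 + c) * (y \<bullet> (Y j' *v y))"
    using c(2) unfolding gap_bound_def by blast
  then have "y \<bullet> (phi m T X a *v y) \<le> (\<Sum>j<m. T b j * ((1 + c) * (y \<bullet> (Y j *v y))))"
    using dom unfolding dominated_along_def phi_quad by (elim allE impE)
  also have "\<dots> = (1 + c) * (y \<bullet> (phi m T Y b *v y))"
    by (simp add: phi_quad sum_distrib_left mult_ac)
  also have "\<dots> = y \<bullet> (phi m T Y b *v y) + c * (y \<bullet> (phi m T Y b *v y))"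
    by (simp add: distrib_right)
  finally have "x \<bullet> (X a *v x) \<le> x \<bullet> (Y b *v x) + c * (y \<bullet> (phi m T Y b *v y))"
    using X_quad_le[OF a, of x u] Y_quad_eq[OF b, of x]
    unfolding y[symmetric] y_def[symmetric] u_def[symmetric] by linarith
  also have "\<dots> \<le> x \<bullet> (Y b *v x) + c * (e * (x \<bullet> (Y b *v x)))"
    using decay[OF b, of x] c(1) by (simp add: y_def mult_left_mono)
  finally show "x \<bullet> (X a *v x) \<le> (1 + c * e) * (x \<bullet> (Y b *v x))"
    by (simp add: algebra_simps)
qed

theorem quad_le:
  assumes ab: "(a, b) \<in> \<rho>"
  shows "x \<bullet> (X a *v x) \<le> x \<bullet> (Y b *v x)"
proof -
  obtain q where q: "0 < q" "\<And>x. q * (norm x)\<^sup>2 \<le> x \<bullet> (Q *v x)"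
    using pd_mat_quad_ge[OF Q_pd] by blast
  obtain MX where MX: "q \<le> MX" "\<And>j x. j < m \<Longrightarrow> x \<bullet> (X j *v x) \<le> MX * (norm x)\<^sup>2"
    using quad_form_bounded[where c = q and m = m and P = X] by blast
  obtain M where M: "MX \<le> M" "\<And>j x. j < m \<Longrightarrow> x \<bullet> (Y j *v x) \<le> M * (norm x)\<^sup>2"
    using quad_form_bounded[where c = MX and m = m and P = Y] by blast
  have X_le: "x \<bullet> (X j *v x) \<le> M * (norm x)\<^sup>2" if "j < m" for j x
    using MX(2)[OF that, of x] M(1) by (meson mult_right_mono order_trans zero_le_power2)
  define e where "e = 1 - q / M"
  have "q \<le> M" using MX(1) M(1) by simp
  then have e: "0 \<le> e" "e < 1" using q(1) by (simp_all add: e_def)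
  have decay: "closed_loop b x \<bullet> (phi m T Y b *v closed_loop b x) \<le> e * (x \<bullet> (Y b *v x))"
    if "b < m" for b x
    unfolding e_def by (rule Y_decay[OF q(1) \<open>q \<le> M\<close> q(2) M(2)[OF that] that])
  have "gap_bound (M / q * e ^ t)" for t
  proof (induction t)
    case 0
    show ?case using gap_bound_init[OF q _ X_le] q(1) \<open>q \<le> M\<close> by simp
  next
    case (Suc t)
    have "gap_bound (M / q * e ^ t * e)"
      using q(1) \<open>q \<le> M\<close> e(1) by (intro gap_bound_step[OF _ Suc decay]) simp_all
    then show ?case by (simp add: mult_ac)
  qed
  then have "x \<bullet> (X a *v x) \<le> (1 + M / q * e ^ t) * (x \<bullet> (Y b *v x))" for t
    using ab unfolding gap_bound_def by blast
  moreover have "(\<lambda>t. (1 + M / q * e ^ t) * (x \<bullet> (Y b *v x))) \<longlonglongrightarrow> (1 + M / q * 0) * (x \<bullet> (Y b *v x))"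
    using e by (intro tendsto_intros LIMSEQ_power_zero) simp
  ultimately show ?thesis by (intro LIMSEQ_le_const) auto
qed

end

lemma riccati_sol_unique:
  assumes T_nonneg: "\<forall>i<m. \<forall>j<m. 0 \<le> T i j" and "pd_mat Q" "pd_mat R"
    and "riccati_sol Q R m A B T X" "in_S_plus m X"
    and "riccati_sol Q R m A B T Y" "in_S_plus m Y"
    and k: "k < m"
  shows "X k = Y k"
proof -
  have "dominated_along (Id_on {..<m}) m (T a) (T a)" if "a < m" for a
    using T_nonneg that by (simp add: dominated_along_Id_on)
  then interpret XY: riccati_comparison Q R m A B T X Y "Id_on {..<m}"
    + YX: riccati_comparison Q R m A B T Y X "Id_on {..<m}"
    using assms by unfold_locales auto
  have "(k, k) \<in> Id_on {..<m}" using k by auto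
  then show ?thesis
    using assms(5,7) k XY.quad_le YX.quad_le
    by (intro symmetric_mat_eqI order_antisym) (auto simp: in_S_plus_def psd_mat_def)
qed

lemma partition_block_subset: "is_partition s r \<Omega> \<Longrightarrow> k < r \<Longrightarrow> \<Omega> k \<subseteq> {..<s}"
  unfolding is_partition_def by blast

lemma partition_block_nonempty: "is_partition s r \<Omega> \<Longrightarrow> k < r \<Longrightarrow> \<Omega> k \<noteq> {}"
  unfolding is_partition_def by blast

lemma partition_block_finite: "is_partition s r \<Omega> \<Longrightarrow> k < r \<Longrightarrow> finite (\<Omega> k)"
  using finite_subset[OF partition_block_subset] by blast

lemma partition_block_unique:
  "is_partition s r \<Omega> \<Longrightarrow> k < r \<Longrightarrow> l < r \<Longrightarrow> i \<in> \<Omega> k \<Longrightarrow> i \<in> \<Omega> l \<Longrightarrow> k = l"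
  unfolding is_partition_def by blast

lemma expand_eq: "is_partition s r \<Omega> \<Longrightarrow> k < r \<Longrightarrow> i \<in> \<Omega> k \<Longrightarrow> expand r \<Omega> Y i = Y k"
  unfolding expand_def block_of_def by (subst the_equality) (auto dest: partition_block_unique)

lemma expand_block_eq:
  "is_partition s r \<Omega> \<Longrightarrow> k < r \<Longrightarrow> i \<in> \<Omega> k \<Longrightarrow> i' \<in> \<Omega> k \<Longrightarrow> expand r \<Omega> Y i = expand r \<Omega> Y i'"
  using expand_eq[of s r \<Omega> k i Y] expand_eq[of s r \<Omega> k i' Y] by simp

lemma sum_partition: "is_partition s r \<Omega> \<Longrightarrow> sum f {..<s} = (\<Sum>l<r. sum f (\<Omega> l))"
proof -
  assume part: "is_partition s r \<Omega>"
  then have "sum f (\<Union>l<r. \<Omega> l) = (\<Sum>l<r. sum f (\<Omega> l))"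
    using partition_block_finite[OF part] partition_block_unique[OF part]
    by (intro sum.UNION_disjoint) auto
  then show ?thesis using part by (simp add: is_partition_def)
qed

lemma sum_weighted_le_of_equal_mass:
  fixes v w f g :: "nat \<Rightarrow> real"
  assumes "finite S" "\<forall>j\<in>S. 0 \<le> v j" "\<forall>j\<in>S. 0 \<le> w j" "sum v S = sum w S"
    and fg: "\<forall>j\<in>S. \<forall>j'\<in>S. f j \<le> g j'"
  shows "(\<Sum>j\<in>S. v j * f j) \<le> (\<Sum>j\<in>S. w j * g j)"
proof (cases "S = {}")
  case False
  define c where "c = Min (g ` S)"
  have "f j \<le> c" "c \<le> g j" if "j \<in> S" for j
    using assms False that by (auto simp: c_def)
  then have "(\<Sum>j\<in>S. v j * f j) \<le> (\<Sum>j\<in>S. v j * c)"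
    using assms by (intro sum_mono mult_left_mono) auto
  also have "\<dots> = (\<Sum>j\<in>S. w j * c)"
    using assms by (simp add: sum_distrib_right[symmetric])
  also have "\<dots> \<le> (\<Sum>j\<in>S. w j * g j)"
    using assms \<open>\<And>j. j \<in> S \<Longrightarrow> c \<le> g j\<close> by (intro sum_mono mult_left_mono) auto
  finally show ?thesis .
qed simp

lemma dominated_along_blocks:
  assumes part: "is_partition s r \<Omega>" and "\<forall>j<s. 0 \<le> v j" "\<forall>j<s. 0 \<le> w j"
    and mass: "\<forall>l<r. (\<Sum>j\<in>\<Omega> l. v j) = (\<Sum>j\<in>\<Omega> l. w j)"
  shows "dominated_along (\<Union>l<r. \<Omega> l \<times> \<Omega> l) s v w"
  unfolding dominated_along_def
proof clarify
  fix f g :: "nat \<Rightarrow> real" assume fg: "\<forall>(j, j') \<in> (\<Union>l<r. \<Omega> l \<times> \<Omega> l). f j \<le> g j'"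
  have "(\<Sum>j\<in>\<Omega> l. v j * f j) \<le> (\<Sum>j\<in>\<Omega> l. w j * g j)" if "l < r" for l
  proof (rule sum_weighted_le_of_equal_mass)
    show "finite (\<Omega> l)" by (rule partition_block_finite[OF part that])
    show "\<forall>j\<in>\<Omega> l. 0 \<le> v j" "\<forall>j\<in>\<Omega> l. 0 \<le> w j"
      using assms(2,3) partition_block_subset[OF part that] by auto
    show "sum v (\<Omega> l) = sum w (\<Omega> l)" using mass that by blast
    show "\<forall>j\<in>\<Omega> l. \<forall>j'\<in>\<Omega> l. f j \<le> g j'" using fg that by blast
  qed
  then show "(\<Sum>j<s. v j * f j) \<le> (\<Sum>j<s. w j * g j)"
    unfolding sum_partition[OF part] by (rule sum_mono) simp
qed

lemma riccati_sol_block_constant: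
  assumes part: "is_partition s r \<Omega>" and T_nonneg: "\<forall>i<s. \<forall>j<s. 0 \<le> T i j"
    and "pd_mat Q" "pd_mat R" "riccati_sol Q R s A B T P" and P_psd: "in_S_plus s P"
    and AB_blocks: "\<forall>k<r. \<forall>i\<in>\<Omega> k. \<forall>i'\<in>\<Omega> k. A i = A i' \<and> B i = B i'"
    and T_blocks: "\<forall>k<r. \<forall>l<r. \<forall>i\<in>\<Omega> k. \<forall>i'\<in>\<Omega> k. (\<Sum>j\<in>\<Omega> l. T i j) = (\<Sum>j\<in>\<Omega> l. T i' j)"
    and k: "k < r" and i: "i \<in> \<Omega> k" and i': "i' \<in> \<Omega> k"
  shows "P i = P i'"
proof -
  let ?\<rho> = "\<Union>l<r. \<Omega> l \<times> \<Omega> l"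
  have in_modes: "\<Omega> l \<subseteq> {..<s}" if "l < r" for l
    by (rule partition_block_subset[OF part that])
  have compat: "A a = A b \<and> B a = B b \<and> dominated_along ?\<rho> s (T a) (T b)"
    if ab: "(a, b) \<in> ?\<rho>" for a b
  proof -
    obtain l where l: "l < r" "a \<in> \<Omega> l" "b \<in> \<Omega> l" using ab by blast
    then have "a < s" "b < s" using in_modes by auto
    moreover have "\<forall>l'<r. (\<Sum>j\<in>\<Omega> l'. T a j) = (\<Sum>j\<in>\<Omega> l'. T b j)"
      using T_blocks l by blast
    ultimately have "dominated_along ?\<rho> s (T a) (T b)"
      using T_nonneg by (intro dominated_along_blocks[OF part]) simp_all
    then show ?thesis using AB_blocks l by blast
  qed
  have rel_sub: "?\<rho> \<subseteq> {..<s} \<times> {..<s}" using in_modes by blast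
  interpret riccati_comparison Q R s A B T P P ?\<rho>
    by unfold_locales (fact T_nonneg assms(3-6) rel_sub compat)+
  have "(i, i') \<in> ?\<rho>" "(i', i) \<in> ?\<rho>" using k i i' by auto
  moreover have "symmetric_mat (P i)" "symmetric_mat (P i')"
    using P_psd in_modes[OF k] i i' by (auto simp: in_S_plus_def psd_mat_def)
  ultimately show ?thesis
    by (intro symmetric_mat_eqI order_antisym quad_le)
qed

lemma riccati_sol_expanded_block_constant:
  assumes part: "is_partition s r \<Omega>" and "\<forall>i<s. \<forall>j<s. 0 \<le> Tb i j"
    and "pd_mat Q" "pd_mat R"
    and "riccati_sol Q R s (expand r \<Omega> Ah) (expand r \<Omega> Bh) Tb P" "in_S_plus s P"
    and T_blocks: "\<forall>k<r. \<forall>l<r. \<forall>i\<in>\<Omega> k. (\<Sum>j\<in>\<Omega> l. Tb i j) = Th k l"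
  shows "\<forall>k<r. \<forall>i\<in>\<Omega> k. \<forall>i'\<in>\<Omega> k. P i = P i'"
proof (intro allI impI ballI)
  fix k i i' assume block: "k < r" "i \<in> \<Omega> k" "i' \<in> \<Omega> k"
  have "\<forall>k<r. \<forall>i\<in>\<Omega> k. \<forall>i'\<in>\<Omega> k.
      expand r \<Omega> Ah i = expand r \<Omega> Ah i' \<and> expand r \<Omega> Bh i = expand r \<Omega> Bh i'"
  proof (intro allI impI ballI)
    fix k i i' assume "k < r" "i \<in> \<Omega> k" "i' \<in> \<Omega> k"
    then show "expand r \<Omega> Ah i = expand r \<Omega> Ah i' \<and> expand r \<Omega> Bh i = expand r \<Omega> Bh i'"
      by (intro conjI expand_block_eq[OF part])
  qed
  moreover have "\<forall>k<r. \<forall>l<r. \<forall>i\<in>\<Omega> k. \<forall>i'\<in>\<Omega> k. (\<Sum>j\<in>\<Omega> l. Tb i j) = (\<Sum>j\<in>\<Omega> l. Tb i' j)"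
    using T_blocks by (intro allI impI ballI) simp
  ultimately show "P i = P i'"
    by (rule riccati_sol_block_constant[OF part assms(2-6) _ _ block])
qed

lemma phi_expand_collapse:
  assumes part: "is_partition s r \<Omega>" and k: "k < r" and i: "i \<in> \<Omega> k"
    and T_blocks: "\<forall>l<r. (\<Sum>j\<in>\<Omega> l. Tb i j) = Th k l"
    and P_blocks: "\<forall>l<r. \<forall>j\<in>\<Omega> l. P j = Ph l"
  shows "phi r Th Ph k = phi s Tb P i"
proof -
  have "phi r Th Ph k = (\<Sum>l<r. (\<Sum>j\<in>\<Omega> l. Tb i j) *\<^sub>R Ph l)"
    unfolding phi_def using T_blocks by simp
  also have "\<dots> = (\<Sum>l<r. \<Sum>j\<in>\<Omega> l. Tb i j *\<^sub>R P j)"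
    using P_blocks by (auto simp: scaleR_sum_left intro!: sum.cong)
  also have "\<dots> = phi s Tb P i"
    unfolding phi_def sum_partition[OF part] ..
  finally show ?thesis .
qed

lemma riccati_sol_reduced_of_expanded:
  assumes part: "is_partition s r \<Omega>"
    and T_blocks: "\<forall>k<r. \<forall>l<r. \<forall>i\<in>\<Omega> k. (\<Sum>j\<in>\<Omega> l. Tb i j) = Th k l"
    and P_sol: "riccati_sol Q R s (expand r \<Omega> Ah) (expand r \<Omega> Bh) Tb P"
    and P_blocks: "\<forall>k<r. \<forall>i\<in>\<Omega> k. P i = Ph k"
  shows "riccati_sol Q R r Ah Bh Th Ph"
    and "\<forall>k<r. \<forall>i\<in>\<Omega> k.
           gainK R r Ah Bh Th Ph k = gainK R s (expand r \<Omega> Ah) (expand r \<Omega> Bh) Tb P i"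
proof -
  have same: "riccR Q R r Ah Bh Th Ph k = riccR Q R s (expand r \<Omega> Ah) (expand r \<Omega> Bh) Tb P i \<and>
      gainK R r Ah Bh Th Ph k = gainK R s (expand r \<Omega> Ah) (expand r \<Omega> Bh) Tb P i"
    if "k < r" "i \<in> \<Omega> k" for k i
  proof -
    have "phi r Th Ph k = phi s Tb P i"
      using T_blocks P_blocks that by (intro phi_expand_collapse[OF part that]) auto
    then show ?thesis by (simp add: riccR_def gainK_def expand_eq[OF part that])
  qed
  then show "\<forall>k<r. \<forall>i\<in>\<Omega> k.
      gainK R r Ah Bh Th Ph k = gainK R s (expand r \<Omega> Ah) (expand r \<Omega> Bh) Tb P i"
    by blast
  show "riccati_sol Q R r Ah Bh Th Ph"
    unfolding riccati_sol_def
  proof (intro allI impI)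
    fix k assume k: "k < r"
    then obtain i where i: "i \<in> \<Omega> k" using partition_block_nonempty[OF part] by blast
    have "Ph k = P i" using P_blocks k i by simp
    also have "\<dots> = riccR Q R s (expand r \<Omega> Ah) (expand r \<Omega> Bh) Tb P i"
      using P_sol partition_block_subset[OF part k] i by (auto simp: riccati_sol_def)
    also have "\<dots> = riccR Q R r Ah Bh Th Ph k" using same[OF k i] by simp
    finally show "Ph k = riccR Q R r Ah Bh Th Ph k" .
  qed
qed

lemma blockwise_constant_factor:
  assumes "\<forall>k<r. \<forall>i\<in>\<Omega> k. \<forall>i'\<in>\<Omega> k. f i = f i'"
  obtains g where "\<forall>k<r. \<forall>i\<in>\<Omega> k. f i = g k"
proof
  show "\<forall>k<r. \<forall>i\<in>\<Omega> k. f i = f (SOME i. i \<in> \<Omega> k)"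
    using assms by (metis someI)
qed

lemma in_S_plus_of_blocks:
  assumes part: "is_partition s r \<Omega>" and "in_S_plus s P" and "\<forall>k<r. \<forall>i\<in>\<Omega> k. P i = Ph k"
  shows "in_S_plus r Ph"
  unfolding in_S_plus_def
proof (intro allI impI)
  fix k assume k: "k < r"
  then obtain i where "i \<in> \<Omega> k" using partition_block_nonempty[OF part] by blast
  then show "psd_mat (Ph k)"
    using assms partition_block_subset[OF part k] k by (auto simp: in_S_plus_def)
qed

lemma reduced_T_nonneg:
  assumes "is_partition s r \<Omega>" "markov s T" "k < r" "l < r"
  shows "0 \<le> reduced_T \<Omega> T k l"
proof -
  have "0 \<le> (\<Sum>i\<in>\<Omega> k. \<Sum>j\<in>\<Omega> l. T i j)"
    using assms partition_block_subset[OF assms(1)] unfolding markov_def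
    by (intro sum_nonneg) blast
  then show ?thesis by (simp add: reduced_T_def)
qed

theorem lemma3:
  fixes s r :: nat
    and \<Omega> :: "nat \<Rightarrow> nat set"
    and A :: "nat \<Rightarrow> real^'n::finite^'n" and B :: "nat \<Rightarrow> real^'p::finite^'n"
    and T Tbar :: "nat \<Rightarrow> nat \<Rightarrow> real"
    and Q :: "real^'n^'n" and R :: "real^'p^'p"
    and Pbar :: "nat \<Rightarrow> real^'n^'n"
  assumes part: "is_partition s r \<Omega>"
    and T_markov: "markov s T"
    and Tbar_markov: "markov s Tbar"
    and Tbar_blocks: "\<forall>k<r. \<forall>l<r. \<forall>i\<in>\<Omega> k.
                        (\<Sum>j\<in>\<Omega> l. Tbar i j) = reduced_T \<Omega> T k l"
    and Q_pd: "pd_mat Q" and R_pd: "pd_mat R"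
    and Pbar_sol: "riccati_sol Q R s (expand r \<Omega> (avg_mat \<Omega> A))
                     (expand r \<Omega> (avg_mat \<Omega> B)) Tbar Pbar"
    and Pbar_pd: "\<forall>i<s. pd_mat (Pbar i)"
  shows "\<exists>Phat.
           riccati_sol Q R r (avg_mat \<Omega> A) (avg_mat \<Omega> B) (reduced_T \<Omega> T) Phat \<and>
           in_S_plus r Phat \<and>
           (\<forall>P'. riccati_sol Q R r (avg_mat \<Omega> A) (avg_mat \<Omega> B) (reduced_T \<Omega> T) P' \<and>
                 in_S_plus r P' \<longrightarrow> (\<forall>k<r. P' k = Phat k)) \<and>
           (\<forall>k<r. \<forall>i\<in>\<Omega> k.
              Phat k = Pbar i \<and>
              gainK R r (avg_mat \<Omega> A) (avg_mat \<Omega> B) (reduced_T \<Omega> T) Phat k =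
              gainK R s (expand r \<Omega> (avg_mat \<Omega> A)) (expand r \<Omega> (avg_mat \<Omega> B)) Tbar Pbar i)"
proof -
  have Tbar_nonneg: "\<forall>i<s. \<forall>j<s. 0 \<le> Tbar i j" using Tbar_markov by (simp add: markov_def)
  have Pbar_psd: "in_S_plus s Pbar" using Pbar_pd by (simp add: in_S_plus_def pd_mat_imp_psd_mat)
  obtain Phat where Phat: "\<forall>k<r. \<forall>i\<in>\<Omega> k. Pbar i = Phat k"
    using riccati_sol_expanded_block_constant
        [OF part Tbar_nonneg Q_pd R_pd Pbar_sol Pbar_psd Tbar_blocks]
    by (rule blockwise_constant_factor)
  note reduced = riccati_sol_reduced_of_expanded[OF part Tbar_blocks Pbar_sol Phat]
  have Phat_psd: "in_S_plus r Phat" by (rule in_S_plus_of_blocks[OF part Pbar_psd Phat])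
  have That_nonneg: "\<forall>k<r. \<forall>l<r. 0 \<le> reduced_T \<Omega> T k l"
    using reduced_T_nonneg[OF part T_markov] by blast
  have "\<forall>P'. riccati_sol Q R r (avg_mat \<Omega> A) (avg_mat \<Omega> B) (reduced_T \<Omega> T) P' \<and> in_S_plus r P'
      \<longrightarrow> (\<forall>k<r. P' k = Phat k)"
    using riccati_sol_unique[OF That_nonneg Q_pd R_pd _ _ reduced(1) Phat_psd] by blast
  moreover have "\<forall>k<r. \<forall>i\<in>\<Omega> k. Phat k = Pbar i \<and>
      gainK R r (avg_mat \<Omega> A) (avg_mat \<Omega> B) (reduced_T \<Omega> T) Phat k =
      gainK R s (expand r \<Omega> (avg_mat \<Omega> A)) (expand r \<Omega> (avg_mat \<Omega> B)) Tbar Pbar i"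
    using Phat reduced(2) by simp
  ultimately show ?thesis
    using reduced(1) Phat_psd by blast
qed

end
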